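(* If $M=\mathbb R^n$ with the Euclidean metric, then $\dim_{P(\mathit{unc})}(E)=\dim_P(E)$ for every $E\subset\mathbb R^n$.
   Context: $|A|$ denotes diameter. An $\varepsilon$-packing of $E$ is a finite or countable family of pairwise disjoint open balls of diameter $\le\varepsilon$ with centers in $E$; an uncentered $\varepsilon$-packing is the same but with the center condition replaced by "each ball meets $E$". For $\alpha\ge0$: $\mathcal P^\alpha_\varepsilon(E)=\sup\sum_i|E_i|^\alpha$ over $\varepsilon$-packings, $\mathcal P^\alpha_0(E)=\lim_{\varepsilon\to0}\mathcal P^\alpha_\varepsilon(E)$, $\mathcal P^\alpha(E)=\inf\{\sum_j\mathcal P^\alpha_0(E_j):E\subset\bigcup_jE_j\}$ over countable covers, $\dim_P(E)=\inf\{\alpha:\mathcal P^\alpha(E)=0\}$; $\dim_{P(\mathit{unc})}$ is defined identically with uncentered packings. *)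

theory Defs
  imports "HOL-Analysis.Analysis"
begin

definition gen_packing ::
  "('a::metric_space set \<Rightarrow> 'a \<Rightarrow> real \<Rightarrow> bool) \<Rightarrow> real \<Rightarrow> 'a set \<Rightarrow> ('a \<times> real) set \<Rightarrow> bool" where
  "gen_packing adm eps E B \<longleftrightarrow>
     countable B \<and>
     (\<forall>(x,r)\<in>B. 0 < r \<and> diameter (ball x r) \<le> eps \<and> adm E x r) \<and>
     (\<forall>(x,r)\<in>B. \<forall>(y,s)\<in>B. (x,r) \<noteq> (y,s) \<longrightarrow> ball x r \<inter> ball y s = {})"

definition centered :: "'a::metric_space set \<Rightarrow> 'a \<Rightarrow> real \<Rightarrow> bool" where
  "centered E x r \<longleftrightarrow> x \<in> E"

definition uncentered :: "'a::metric_space set \<Rightarrow> 'a \<Rightarrow> real \<Rightarrow> bool" where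
  "uncentered E x r \<longleftrightarrow> ball x r \<inter> E \<noteq> {}"

definition gen_pack_eps ::
  "('a::metric_space set \<Rightarrow> 'a \<Rightarrow> real \<Rightarrow> bool) \<Rightarrow> real \<Rightarrow> real \<Rightarrow> 'a set \<Rightarrow> ennreal" where
  "gen_pack_eps adm \<alpha> eps E =
     (SUP B \<in> {B. gen_packing adm eps E B}.
        infsum (\<lambda>(x,r). ennreal (diameter (ball x r) powr \<alpha>)) B)"

definition gen_pack_0 ::
  "('a::metric_space set \<Rightarrow> 'a \<Rightarrow> real \<Rightarrow> bool) \<Rightarrow> real \<Rightarrow> 'a set \<Rightarrow> ennreal" where
  "gen_pack_0 adm \<alpha> E = Lim (at_right (0::real)) (\<lambda>eps. gen_pack_eps adm \<alpha> eps E)"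

definition gen_pack_measure ::
  "('a::metric_space set \<Rightarrow> 'a \<Rightarrow> real \<Rightarrow> bool) \<Rightarrow> real \<Rightarrow> 'a set \<Rightarrow> ennreal" where
  "gen_pack_measure adm \<alpha> E =
     (INF C \<in> {C :: nat \<Rightarrow> 'a set. E \<subseteq> (\<Union>j. C j)}. (\<Sum>j. gen_pack_0 adm \<alpha> (C j)))"

definition gen_pack_dim ::
  "('a::metric_space set \<Rightarrow> 'a \<Rightarrow> real \<Rightarrow> bool) \<Rightarrow> 'a set \<Rightarrow> ereal" where
  "gen_pack_dim adm E = Inf {ereal \<alpha> | \<alpha>. 0 \<le> \<alpha> \<and> gen_pack_measure adm \<alpha> E = 0}"

definition packing_dim :: "'a::metric_space set \<Rightarrow> ereal" where
  "packing_dim E = gen_pack_dim centered E"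

definition packing_dim_unc :: "'a::metric_space set \<Rightarrow> ereal" where
  "packing_dim_unc E = gen_pack_dim uncentered E"

end

theory Submission
  imports Defs
begin

text \<open>
  Every centred packing is uncentred, so the uncentred packing measures dominate the centred
  ones. Conversely, sort the balls of an uncentred eps-packing of E by dyadic radius,
  2^(-j-1) < r <= 2^(-j), pick a point of E in each ball of scale j and a maximal
  2a-separated set S of these points, where a = 2^(-j-1). The balls B(s,a), s in S, form a
  centred packing, and comparing volumes in R^n shows that each s is within 2a of points of
  at most 5^n of the disjoint uncentred balls. So the gamma-sum of scale j is at most
  5^n 2^gamma 2^(-j(gamma-alpha)) times the alpha-sum of a centred packing, and the geometric
  series over j gives P^gamma_unc <= C P^alpha for every alpha < gamma. Hence a set that is
  null for P^alpha is null for P^gamma_unc whenever gamma > alpha, and the dimensions agree.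
\<close>

lemma gen_packing_weaken:
  assumes "gen_packing adm e E B" "e \<le> e'"
    and "\<And>x r. 0 < r \<Longrightarrow> adm E x r \<Longrightarrow> adm' E x r"
  shows "gen_packing adm' e' E B"
  using assms unfolding gen_packing_def by fastforce

lemma gen_packing_subset:
  assumes "gen_packing adm e E B" "B' \<subseteq> B"
  shows "gen_packing adm e E B'"
  using assms countable_subset[OF assms(2)] unfolding gen_packing_def
  by (simp add: Ball_def split_paired_All subset_iff) meson

lemma centered_imp_uncentered: "0 < r \<Longrightarrow> centered E x r \<Longrightarrow> uncentered E x r"
  unfolding centered_def uncentered_def by (metis centre_in_ball disjoint_iff)

lemma gen_pack_eps_mono:
  assumes "e \<le> e'" "\<And>x r. 0 < r \<Longrightarrow> adm E x r \<Longrightarrow> adm' E x r"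
  shows "gen_pack_eps adm \<alpha> e E \<le> gen_pack_eps adm' \<alpha> e' E"
  unfolding gen_pack_eps_def
  by (rule SUP_subset_mono) (auto intro: gen_packing_weaken assms)

lemma gen_pack_0_eq_INF: "gen_pack_0 adm \<alpha> E = (INF e\<in>{0<..}. gen_pack_eps adm \<alpha> e E)"
proof -
  let ?P = "\<lambda>e. gen_pack_eps adm \<alpha> e E"
  have "(?P \<longlongrightarrow> (INF e\<in>{0<..}. ?P e)) (at_right 0)"
  proof (rule decreasing_tendsto)
    show "\<forall>\<^sub>F e in at_right 0. (INF e\<in>{0<..}. ?P e) \<le> ?P e"
      unfolding eventually_at_right_field by (intro exI[of _ 1]) (auto intro!: INF_lower)
    fix y assume "(INF e\<in>{0<..}. ?P e) < y"
    then obtain e0 where "0 < e0" "?P e0 < y" by (auto simp: INF_less_iff)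
    have "?P e < y" if "e < e0" for e
    proof -
      have "?P e \<le> ?P e0" by (rule gen_pack_eps_mono) (use that in auto)
      then show ?thesis using \<open>?P e0 < y\<close> by (rule le_less_trans)
    qed
    with \<open>0 < e0\<close> show "\<forall>\<^sub>F e in at_right 0. ?P e < y"
      unfolding eventually_at_right_field by blast
  qed
  then show ?thesis
    unfolding gen_pack_0_def by (intro tendsto_Lim) auto
qed

lemma gen_pack_measure_mono_adm:
  assumes "\<And>F x r. 0 < r \<Longrightarrow> adm F x r \<Longrightarrow> adm' F x r"
  shows "gen_pack_measure adm \<alpha> E \<le> gen_pack_measure adm' \<alpha> E"
  unfolding gen_pack_measure_def gen_pack_0_eq_INF
  by (intro INF_mono bexI suminf_le summableI) (auto intro!: INF_mono bexI gen_pack_eps_mono assms)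

lemma ennreal_le_mult_Inf:
  fixes x K :: ennreal
  assumes "A \<noteq> {}" "K < top" "\<And>y. y \<in> A \<Longrightarrow> x \<le> K * y"
  shows "x \<le> K * Inf A"
proof (cases "K = 0")
  case True
  with assms show ?thesis by auto
next
  case False
  then have "x / K \<le> Inf A"
    using assms(3) by (intro Inf_greatest divide_le_posI_ennreal) (auto simp: zero_less_iff_neq_zero)
  then have "x / K * K \<le> Inf A * K" by (rule mult_right_mono) simp
  moreover have "x / K * K = x"
    using False assms(2) by (simp add: ennreal_divide_times)
  ultimately show ?thesis by (simp add: mult.commute)
qed

lemma gen_pack_0_le_mult:
  assumes "K < top"
    and "\<And>e. 0 < e \<Longrightarrow> e \<le> 1 \<Longrightarrow> gen_pack_eps adm \<gamma> e E \<le> K * gen_pack_eps adm' \<alpha> e E"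
  shows "gen_pack_0 adm \<gamma> E \<le> K * gen_pack_0 adm' \<alpha> E"
  unfolding gen_pack_0_eq_INF
proof (rule ennreal_le_mult_Inf)
  fix z assume "z \<in> (\<lambda>e. gen_pack_eps adm' \<alpha> e E) ` {0<..}"
  then obtain e where e: "0 < e" "z = gen_pack_eps adm' \<alpha> e E" by auto
  have "(INF e\<in>{0<..}. gen_pack_eps adm \<gamma> e E) \<le> gen_pack_eps adm \<gamma> (min e 1) E"
    using e by (intro INF_lower) auto
  also have "\<dots> \<le> K * gen_pack_eps adm' \<alpha> (min e 1) E"
    using e by (intro assms(2)) auto
  also have "\<dots> \<le> K * z"
    unfolding e(2) by (intro mult_left_mono gen_pack_eps_mono) auto
  finally show "(INF e\<in>{0<..}. gen_pack_eps adm \<gamma> e E) \<le> K * z" .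
qed (use assms in auto)

lemma gen_pack_measure_le_mult:
  assumes "K < top" "\<And>F. gen_pack_0 adm \<gamma> F \<le> K * gen_pack_0 adm' \<alpha> F"
  shows "gen_pack_measure adm \<gamma> E \<le> K * gen_pack_measure adm' \<alpha> E"
  unfolding gen_pack_measure_def[of adm']
proof (rule ennreal_le_mult_Inf)
  fix z assume "z \<in> (\<lambda>C. \<Sum>j. gen_pack_0 adm' \<alpha> (C j)) ` {C. E \<subseteq> (\<Union>j. C j)}"
  then obtain C where C: "E \<subseteq> (\<Union>j. C j)" "z = (\<Sum>j. gen_pack_0 adm' \<alpha> (C j))" by auto
  have "gen_pack_measure adm \<gamma> E \<le> (\<Sum>j. gen_pack_0 adm \<gamma> (C j))"
    unfolding gen_pack_measure_def using C by (intro INF_lower) auto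
  also have "\<dots> \<le> (\<Sum>j. K * gen_pack_0 adm' \<alpha> (C j))"
    by (intro suminf_le summableI assms(2))
  finally show "gen_pack_measure adm \<gamma> E \<le> K * z"
    using C by simp
qed (use assms in \<open>auto intro!: exI[of _ "\<lambda>_. UNIV"]\<close>)

lemma dyadic_scale_exists:
  fixes r :: real
  assumes "0 < r" "r \<le> 1"
  obtains k :: nat where "(1/2)^Suc k < r" "r \<le> (1/2)^k"
proof -
  obtain n :: nat where "(1/2)^n < r"
    using real_arch_pow_inv[of r "1/2"] assms by auto
  moreover have "\<not> (1/2::real)^0 < r" using assms by simp
  ultimately obtain k where "\<forall>i\<le>k. \<not> (1/2)^i < r" "(1/2)^Suc k < r"
    using ex_least_nat_less[of "\<lambda>n. (1/2)^n < r"] by meson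
  then show ?thesis using that by (simp add: not_less)
qed

lemma finite_maximal_separated_subset:
  fixes Y :: "'a::metric_space set"
  assumes "finite Y" "0 < d"
  obtains S where "S \<subseteq> Y"
    "\<And>s t. s \<in> S \<Longrightarrow> t \<in> S \<Longrightarrow> s \<noteq> t \<Longrightarrow> d \<le> dist s t"
    "\<And>y. y \<in> Y \<Longrightarrow> \<exists>s\<in>S. dist y s < d"
proof -
  have "\<exists>S\<subseteq>Y. (\<forall>s\<in>S. \<forall>t\<in>S. s \<noteq> t \<longrightarrow> d \<le> dist s t) \<and> (\<forall>y\<in>Y. \<exists>s\<in>S. dist y s < d)"
    using assms(1)
  proof (induction Y rule: finite_induct)
    case (insert y Y)
    from insert.IH obtain S where S: "S \<subseteq> Y" "\<forall>s\<in>S. \<forall>t\<in>S. s \<noteq> t \<longrightarrow> d \<le> dist s t"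
      "\<forall>z\<in>Y. \<exists>s\<in>S. dist z s < d" by (elim exE conjE)
    show ?case
    proof (cases "\<exists>s\<in>S. dist y s < d")
      case True
      with S show ?thesis by (intro exI[of _ S]) auto
    next
      case False
      then have "\<forall>s\<in>insert y S. \<forall>t\<in>insert y S. s \<noteq> t \<longrightarrow> d \<le> dist s t"
        using S(2) by (auto simp: not_less dist_commute)
      moreover have "\<forall>z\<in>insert y Y. \<exists>s\<in>insert y S. dist z s < d"
        using S(3) assms(2) by auto
      ultimately show ?thesis using S(1) by (intro exI[of _ "insert y S"]) auto
    qed
  qed simp
  then obtain S where "S \<subseteq> Y" "\<forall>s\<in>S. \<forall>t\<in>S. s \<noteq> t \<longrightarrow> d \<le> dist s t"
    "\<forall>y\<in>Y. \<exists>s\<in>S. dist y s < d" by (elim exE conjE)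
  then show ?thesis by (intro that) auto
qed

lemma card_disjoint_balls_near_point_le:
  fixes s :: "'a::euclidean_space"
  assumes "finite C" "0 < a" "\<And>c. c \<in> C \<Longrightarrow> dist s c < 4 * a"
    and "\<And>c c'. c \<in> C \<Longrightarrow> c' \<in> C \<Longrightarrow> c \<noteq> c' \<Longrightarrow> ball c a \<inter> ball c' a = {}"
  shows "card C \<le> 5 ^ DIM('a)"
proof -
  define v where "v = measure lborel (ball (0::'a) 1)"
  have "v > 0" unfolding v_def by (rule content_ball_pos) simp
  have ball_fin: "emeasure lborel (ball c r) \<noteq> \<infinity>" for c :: 'a and r
    by (rule less_imp_neq[OF emeasure_lborel_ball_finite])
  have "card C * (a ^ DIM('a) * v) = (\<Sum>c\<in>C. measure lborel (ball c a))"
    using assms(2) by (simp add: content_ball_conv_unit_ball[of a] v_def)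
  also have "\<dots> = measure lborel (\<Union>c\<in>C. ball c a)"
    using assms(1,4) ball_fin
    by (intro measure_finite_Union[symmetric]) (auto simp: disjoint_family_on_def)
  also have "\<dots> \<le> measure lborel (ball s (5 * a))"
  proof (rule measure_mono_fmeasurable)
    show "(\<Union>c\<in>C. ball c a) \<subseteq> ball s (5 * a)"
    proof
      fix z assume "z \<in> (\<Union>c\<in>C. ball c a)"
      then obtain c where "c \<in> C" "dist c z < a" by auto
      moreover have "dist s z \<le> dist s c + dist c z" by (rule dist_triangle)
      ultimately show "z \<in> ball s (5 * a)" using assms(3)[of c] by simp
    qed
    show "(\<Union>c\<in>C. ball c a) \<in> sets lborel"
      using assms(1) by (intro sets.finite_UN) auto
    show "ball s (5 * a) \<in> fmeasurable lborel"
      using emeasure_lborel_ball_finite by (intro fmeasurableI) (simp_all add: infinity_ennreal_def)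
  qed
  also have "\<dots> = 5 ^ DIM('a) * (a ^ DIM('a) * v)"
    using assms(2) by (simp add: content_ball_conv_unit_ball[of "5 * a"] v_def power_mult_distrib)
  finally have "real (card C) * (a ^ DIM('a) * v) \<le> 5 ^ DIM('a) * (a ^ DIM('a) * v)" .
  then have "real (card C) \<le> 5 ^ DIM('a)"
    using \<open>v > 0\<close> assms(2) by simp
  then show ?thesis by (simp flip: of_nat_le_iff)
qed

lemma card_disjoint_balls_near_separated_le:
  fixes T :: "('a::euclidean_space \<times> real) set"
  assumes "finite T" "finite S" "0 < a"
    and radius: "\<And>p. p \<in> T \<Longrightarrow> a < snd p \<and> snd p \<le> 2 * a"
    and disjoint: "\<And>p q. p \<in> T \<Longrightarrow> q \<in> T \<Longrightarrow> p \<noteq> q \<Longrightarrow>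
      ball (fst p) (snd p) \<inter> ball (fst q) (snd q) = {}"
    and near: "\<And>p. p \<in> T \<Longrightarrow> \<exists>s\<in>S. \<exists>y\<in>ball (fst p) (snd p). dist y s < 2 * a"
  shows "card T \<le> 5 ^ DIM('a) * card S"
proof -
  define T_near where "T_near s = {p \<in> T. \<exists>y\<in>ball (fst p) (snd p). dist y s < 2 * a}" for s
  have card_T_near: "card (T_near s) \<le> 5 ^ DIM('a)" for s
  proof -
    have "inj_on fst (T_near s)"
    proof (rule inj_onI)
      fix p q assume "p \<in> T_near s" "q \<in> T_near s" "fst p = fst q"
      then have "fst q \<in> ball (fst p) (snd p) \<inter> ball (fst q) (snd q)"
        using radius[of p] radius[of q] assms(3) by (auto simp: T_near_def)
      with \<open>p \<in> T_near s\<close> \<open>q \<in> T_near s\<close> show "p = q"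
        using disjoint[of p q] unfolding T_near_def by blast
    qed
    then have "card (T_near s) = card (fst ` T_near s)" by (simp add: card_image)
    also have "\<dots> \<le> 5 ^ DIM('a)"
    proof (rule card_disjoint_balls_near_point_le[of _ a s])
      fix c assume "c \<in> fst ` T_near s"
      then obtain p y where p: "p \<in> T" "c = fst p" "dist c y < snd p" "dist y s < 2 * a"
        by (auto simp: T_near_def)
      have "dist s c \<le> dist s y + dist y c" by (rule dist_triangle)
      also have "\<dots> < 4 * a" using p radius[of p] by (simp add: dist_commute)
      finally show "dist s c < 4 * a" .
    next
      fix c c' assume "c \<in> fst ` T_near s" "c' \<in> fst ` T_near s" "c \<noteq> c'"
      then obtain p q where "p \<in> T" "q \<in> T" "c = fst p" "c' = fst q" "p \<noteq> q"
        by (auto simp: T_near_def)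
      moreover have "ball c a \<subseteq> ball (fst p) (snd p)" "ball c' a \<subseteq> ball (fst q) (snd q)"
        using calculation radius[of p] radius[of q] by (auto intro!: subset_ball)
      ultimately show "ball c a \<inter> ball c' a = {}"
        using disjoint[of p q] by blast
    qed (use assms(1,3) in \<open>auto simp: T_near_def\<close>)
    finally show ?thesis .
  qed
  have "card T \<le> card (\<Union>s\<in>S. T_near s)"
    using assms(1,2) near by (intro card_mono) (auto simp: T_near_def)
  also have "\<dots> \<le> (\<Sum>s\<in>S. card (T_near s))"
    by (rule card_UN_le) (rule assms(2))
  also have "\<dots> \<le> 5 ^ DIM('a) * card S"
    using sum_mono[of S "\<lambda>s. card (T_near s)" "\<lambda>_. 5 ^ DIM('a)"] card_T_near
    by (simp add: mult.commute)
  finally show ?thesis .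
qed

lemma separated_subset_le_gen_pack_eps:
  fixes S :: "'a::euclidean_space set"
  assumes "finite S" "S \<subseteq> E" "0 < a" "2 * a \<le> e"
    and "\<And>s t. s \<in> S \<Longrightarrow> t \<in> S \<Longrightarrow> s \<noteq> t \<Longrightarrow> 2 * a \<le> dist s t"
  shows "ennreal (card S * (2 * a) powr \<alpha>) \<le> gen_pack_eps centered \<alpha> e E"
proof -
  let ?B = "(\<lambda>s. (s, a)) ` S"
  have "ball s a \<inter> ball t a = {}" if "s \<in> S" "t \<in> S" "s \<noteq> t" for s t
    using assms(5)[OF that] by (intro disjoint_ballI) simp
  then have "gen_packing centered e E ?B"
    using assms(1-4) unfolding gen_packing_def centered_def
    by (auto intro: countable_finite)
  then have "infsum (\<lambda>(x,r). ennreal (diameter (ball x r) powr \<alpha>)) ?B \<le> gen_pack_eps centered \<alpha> e E"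
    unfolding gen_pack_eps_def by (intro SUP_upper) simp
  moreover have "infsum (\<lambda>(x,r). ennreal (diameter (ball x r) powr \<alpha>)) ?B = card S * (2 * a) powr \<alpha>"
    using assms(1,3) by (simp add: sum.reindex inj_on_def ennreal_of_nat_eq_real_of_nat ennreal_mult')
  ultimately show ?thesis by simp
qed

lemma uncentered_scale_sum_le:
  fixes B :: "('a::euclidean_space \<times> real) set"
  assumes packing: "gen_packing uncentered e E B" and "finite B" "0 < a" "0 \<le> \<gamma>"
    and radius: "\<And>p. p \<in> B \<Longrightarrow> a < snd p \<and> snd p \<le> 2 * a"
  shows "(\<Sum>(x,r)\<in>B. ennreal (diameter (ball x r) powr \<gamma>))
    \<le> ennreal (5 ^ DIM('a) * 2 powr \<gamma> * (2 * a) powr (\<gamma> - \<alpha>)) * gen_pack_eps centered \<alpha> e E"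
proof (cases "B = {}")
  case False
  have diam: "\<And>p. p \<in> B \<Longrightarrow> 2 * snd p \<le> e"
    and meets: "\<And>p. p \<in> B \<Longrightarrow> ball (fst p) (snd p) \<inter> E \<noteq> {}"
    and disjoint: "\<And>p q. p \<in> B \<Longrightarrow> q \<in> B \<Longrightarrow> p \<noteq> q \<Longrightarrow>
      ball (fst p) (snd p) \<inter> ball (fst q) (snd q) = {}"
    using packing unfolding gen_packing_def uncentered_def by fastforce+
  have "\<forall>p\<in>B. \<exists>z. z \<in> ball (fst p) (snd p) \<inter> E"
    using meets by blast
  then obtain y where y: "\<And>p. p \<in> B \<Longrightarrow> y p \<in> ball (fst p) (snd p) \<inter> E"
    by metis
  obtain S where "S \<subseteq> y ` B"
    and separated: "\<And>s t. s \<in> S \<Longrightarrow> t \<in> S \<Longrightarrow> s \<noteq> t \<Longrightarrow> 2 * a \<le> dist s t"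
    and cover: "\<And>z. z \<in> y ` B \<Longrightarrow> \<exists>s\<in>S. dist z s < 2 * a"
    using finite_maximal_separated_subset[of "y ` B" "2 * a"] \<open>finite B\<close> \<open>0 < a\<close> by auto
  have "finite S"
    using \<open>S \<subseteq> y ` B\<close> \<open>finite B\<close> finite_subset by blast
  have card_B: "card B \<le> 5 ^ DIM('a) * card S"
  proof (rule card_disjoint_balls_near_separated_le)
    fix p assume "p \<in> B"
    with y[of p] cover[of "y p"] show "\<exists>s\<in>S. \<exists>z\<in>ball (fst p) (snd p). dist z s < 2 * a"
      by blast
  qed (use assms \<open>finite S\<close> disjoint in auto)
  obtain p0 where "p0 \<in> B" using False by blast
  then have "2 * a \<le> e"
    using diam[of p0] radius[of p0] by linarith
  then have packing_S: "ennreal (card S * (2 * a) powr \<alpha>) \<le> gen_pack_eps centered \<alpha> e E"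
    using \<open>finite S\<close> \<open>S \<subseteq> y ` B\<close> y separated \<open>0 < a\<close>
    by (intro separated_subset_le_gen_pack_eps) auto
  have "(\<Sum>(x,r)\<in>B. ennreal (diameter (ball x r) powr \<gamma>)) = (\<Sum>p\<in>B. ennreal ((2 * snd p) powr \<gamma>))"
    using radius \<open>0 < a\<close> by (intro sum.cong) (fastforce split: prod.splits)+
  also have "\<dots> = ennreal (\<Sum>p\<in>B. (2 * snd p) powr \<gamma>)"
    by (rule sum_ennreal) simp
  also have "\<dots> \<le> ennreal (card B * (4 * a) powr \<gamma>)"
    using radius \<open>0 < a\<close> \<open>0 \<le> \<gamma>\<close>
    by (intro ennreal_leI sum_bounded_above powr_mono2) fastforce+
  also have "\<dots> \<le> ennreal (5 ^ DIM('a) * card S * (4 * a) powr \<gamma>)"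
    using card_B by (intro ennreal_leI mult_right_mono) (auto simp flip: of_nat_mult of_nat_le_iff)
  also have "\<dots> = ennreal (5 ^ DIM('a) * 2 powr \<gamma> * (2 * a) powr (\<gamma> - \<alpha>)) * ennreal (card S * (2 * a) powr \<alpha>)"
  proof -
    have "(4 * a) powr \<gamma> = 2 powr \<gamma> * ((2 * a) powr (\<gamma> - \<alpha>) * (2 * a) powr \<alpha>)"
      using \<open>0 < a\<close> by (simp add: powr_mult[symmetric] powr_add[symmetric])
    then show ?thesis
      by (simp add: ennreal_mult'[symmetric] mult_ac)
  qed
  also have "\<dots> \<le> ennreal (5 ^ DIM('a) * 2 powr \<gamma> * (2 * a) powr (\<gamma> - \<alpha>)) * gen_pack_eps centered \<alpha> e E"
    using packing_S by (rule mult_left_mono) simp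
  finally show ?thesis .
qed simp

definition uncentered_packing_constant :: "nat \<Rightarrow> real \<Rightarrow> real \<Rightarrow> real" where
  "uncentered_packing_constant n \<alpha> \<gamma> = 5 ^ n * 2 powr \<gamma> / (1 - (1/2) powr (\<gamma> - \<alpha>))"

lemma uncentered_finite_sum_le:
  fixes B :: "('a::euclidean_space \<times> real) set"
  assumes packing: "gen_packing uncentered e E B" and "finite B" "e \<le> 1" "0 \<le> \<gamma>" "\<alpha> < \<gamma>"
  shows "(\<Sum>(x,r)\<in>B. ennreal (diameter (ball x r) powr \<gamma>))
    \<le> ennreal (uncentered_packing_constant DIM('a) \<alpha> \<gamma>) * gen_pack_eps centered \<alpha> e E"
proof -
  define q where "q = (1/2::real) powr (\<gamma> - \<alpha>)"
  define c where "c = 5 ^ DIM('a) * 2 powr \<gamma>"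
  let ?f = "\<lambda>(x,r). ennreal (diameter (ball x r) powr \<gamma>)"
  let ?P = "gen_pack_eps centered \<alpha> e E"
  have "0 \<le> q" "q < 1"
    using \<open>\<alpha> < \<gamma>\<close> powr_less_mono2[of "\<gamma> - \<alpha>" "1/2" 1] by (simp_all add: q_def)
  have "\<exists>j::nat. (1/2)^Suc j < snd p \<and> snd p \<le> (1/2)^j" if "p \<in> B" for p
  proof -
    from packing that have "0 < snd p" "2 * snd p \<le> e"
      unfolding gen_packing_def by fastforce+
    with \<open>e \<le> 1\<close> have "snd p \<le> 1" by linarith
    with \<open>0 < snd p\<close> obtain j :: nat where "(1/2)^Suc j < snd p" "snd p \<le> (1/2)^j"
      by (rule dyadic_scale_exists)
    then show ?thesis by blast
  qed
  then obtain k where k: "\<And>p. p \<in> B \<Longrightarrow> (1/2)^Suc (k p) < snd p \<and> snd p \<le> (1/2)^k p"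
    by metis
  have scale: "sum ?f {p \<in> B. k p = j} \<le> ennreal (c * q ^ j) * ?P" for j
  proof -
    have "(1/2::real) ^ j = 2 * (1/2) ^ Suc j" by simp
    moreover have "((1/2::real) ^ j) powr (\<gamma> - \<alpha>) = q ^ j"
      by (simp add: q_def powr_realpow[symmetric] powr_powr powr_power mult.commute)
    ultimately show ?thesis
      using uncentered_scale_sum_le[of e E "{p \<in> B. k p = j}" "(1/2)^Suc j" \<gamma> \<alpha>]
        gen_packing_subset[OF packing] k \<open>finite B\<close> \<open>0 \<le> \<gamma>\<close>
      by (auto simp: c_def mult.assoc)
  qed
  have "sum ?f B = (\<Sum>j\<in>k ` B. sum ?f {p \<in> B. k p = j})"
    using \<open>finite B\<close> by (intro sum.group[symmetric]) auto
  also have "\<dots> \<le> (\<Sum>j\<in>k ` B. ennreal (c * q ^ j) * ?P)"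
    by (intro sum_mono scale)
  also have "\<dots> = ennreal (c * (\<Sum>j\<in>k ` B. q ^ j)) * ?P"
    using \<open>0 \<le> q\<close> by (simp add: c_def sum_distrib_right[symmetric] sum_distrib_left sum_ennreal)
  also have "\<dots> \<le> ennreal (c * (1 / (1 - q))) * ?P"
  proof (intro mult_right_mono ennreal_leI mult_left_mono)
    have "(\<Sum>j\<in>k ` B. q ^ j) \<le> (\<Sum>j. q ^ j)"
      using \<open>finite B\<close> \<open>0 \<le> q\<close> \<open>q < 1\<close> by (intro sum_le_suminf summable_geometric) auto
    then show "(\<Sum>j\<in>k ` B. q ^ j) \<le> 1 / (1 - q)"
      using \<open>0 \<le> q\<close> \<open>q < 1\<close> by (simp add: suminf_geometric)
  qed (simp_all add: c_def)
  finally show ?thesis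
    by (simp add: uncentered_packing_constant_def c_def q_def)
qed

lemma gen_pack_eps_uncentered_le:
  fixes E :: "'a::euclidean_space set"
  assumes "e \<le> 1" "0 \<le> \<gamma>" "\<alpha> < \<gamma>"
  shows "gen_pack_eps uncentered \<gamma> e E
    \<le> ennreal (uncentered_packing_constant DIM('a) \<alpha> \<gamma>) * gen_pack_eps centered \<alpha> e E"
  unfolding gen_pack_eps_def[of uncentered]
proof (rule SUP_least)
  fix B assume B: "B \<in> {B. gen_packing uncentered e E B}"
  show "infsum (\<lambda>(x,r). ennreal (diameter (ball x r) powr \<gamma>)) B
    \<le> ennreal (uncentered_packing_constant DIM('a) \<alpha> \<gamma>) * gen_pack_eps centered \<alpha> e E"
    unfolding nonneg_infsum_complete[OF zero_le]
  proof (rule SUP_least)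
    fix B' assume "B' \<in> {B'. finite B' \<and> B' \<subseteq> B}"
    with B have "gen_packing uncentered e E B'" "finite B'"
      using gen_packing_subset by auto
    then show "sum (\<lambda>(x,r). ennreal (diameter (ball x r) powr \<gamma>)) B'
      \<le> ennreal (uncentered_packing_constant DIM('a) \<alpha> \<gamma>) * gen_pack_eps centered \<alpha> e E"
      using assms by (rule uncentered_finite_sum_le)
  qed
qed

lemma gen_pack_measure_uncentered_le:
  fixes E :: "'a::euclidean_space set"
  assumes "0 \<le> \<gamma>" "\<alpha> < \<gamma>"
  shows "gen_pack_measure uncentered \<gamma> E
    \<le> ennreal (uncentered_packing_constant DIM('a) \<alpha> \<gamma>) * gen_pack_measure centered \<alpha> E"
  using assms
  by (intro gen_pack_measure_le_mult gen_pack_0_le_mult gen_pack_eps_uncentered_le) auto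

lemma Inf_null_exponents_eq:
  fixes m m' :: "real \<Rightarrow> ennreal"
  assumes "\<And>\<alpha>. m \<alpha> \<le> m' \<alpha>"
    and "\<And>\<alpha> \<gamma>. 0 \<le> \<alpha> \<Longrightarrow> \<alpha> < \<gamma> \<Longrightarrow> m \<alpha> = 0 \<Longrightarrow> m' \<gamma> = 0"
  shows "Inf {ereal \<alpha> | \<alpha>. 0 \<le> \<alpha> \<and> m' \<alpha> = 0} = Inf {ereal \<alpha> | \<alpha>. 0 \<le> \<alpha> \<and> m \<alpha> = 0}"
    (is "Inf ?N' = Inf ?N")
proof (rule antisym)
  show "Inf ?N' \<le> Inf ?N"
  proof (rule Inf_greatest)
    fix x assume "x \<in> ?N"
    then obtain \<alpha> where \<alpha>: "x = ereal \<alpha>" "0 \<le> \<alpha>" "m \<alpha> = 0" by auto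
    show "Inf ?N' \<le> x" unfolding \<alpha>(1)
    proof (rule ereal_le_epsilon2)
      fix d :: real assume "0 < d"
      with \<alpha> assms(2)[of \<alpha> "\<alpha> + d"] have "ereal (\<alpha> + d) \<in> ?N'" by auto
      then show "Inf ?N' \<le> ereal \<alpha> + ereal d" by (simp add: Inf_lower)
    qed
  qed
  have "?N' \<subseteq> ?N"
    using assms(1) by (force intro: order.antisym order.trans)
  then show "Inf ?N \<le> Inf ?N'" by (rule Inf_superset_mono)
qed

theorem corollary1:
  fixes E :: "(real ^ 'n) set"
  shows "packing_dim_unc E = packing_dim E"
  unfolding packing_dim_unc_def packing_dim_def gen_pack_dim_def
proof (rule Inf_null_exponents_eq)
  show "gen_pack_measure centered \<alpha> E \<le> gen_pack_measure uncentered \<alpha> E" for \<alpha>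
    by (rule gen_pack_measure_mono_adm) (rule centered_imp_uncentered)
  fix \<alpha> \<gamma> :: real
  assume "0 \<le> \<alpha>" "\<alpha> < \<gamma>" "gen_pack_measure centered \<alpha> E = 0"
  then show "gen_pack_measure uncentered \<gamma> E = 0"
    using gen_pack_measure_uncentered_le[of \<gamma> \<alpha> E] by simp
qed

end
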